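(* Fix integers $N\ge 2$ and $K\ge 1$. Let $\mathcal{M}$ be any set of scoring tensors in $\mathbb{R}^{N\times N\times K}$ such that each $\mathcal{S}\in\mathcal{M}$ is the scoring tensor of a bilinear model of some size $r<N/32$, i.e. there exist $\mathbf{A}\in\mathbb{R}^{N\times r}$ and $\mathbf{R}_1,\dots,\mathbf{R}_K\in\mathbb{R}^{r\times r}$ with $[\mathcal{S}]_{ijk}=\mathbf{a}_i^T\mathbf{R}_k\mathbf{a}_j$ for all $i,j,k$. Then $\mathcal{M}$ is not universal, i.e. $\pi(\mathcal{M})\ne\pi(\mathbb{R}^{N\times N\times K})$.
   Context: For a real $N\times N$ matrix $\mathbf{S}$, $\pi(\mathbf{S})$ is the matrix of dense ranks: $\pi_{ij}(\mathbf{S})=1+$ (number of distinct values among entries of $\mathbf{S}$ strictly larger than $s_{ij}$). For a tensor in $\mathbb{R}^{N\times N\times K}$, $\pi$ is applied to each frontal slice (the $N\times N$ matrices obtained by fixing the third index); for a set $X$, $\pi(X)=\{\pi(x):x\in X\}$. $\mathbf{a}_i$ denotes the $i$-th row of $\mathbf{A}$. *)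

theory Defs
  imports "HOL-Analysis.Analysis"
begin

(* An N x N x K real tensor is represented as a function nat => nat => nat => real
   (indices i j in {0..<N}, k in {0..<K}), required to be 0 outside this box
   so that distinct functions correspond to distinct tensors. *)
definition tensors :: "nat \<Rightarrow> nat \<Rightarrow> (nat \<Rightarrow> nat \<Rightarrow> nat \<Rightarrow> real) set" where
  "tensors N K = {S. \<forall>i j k. \<not> (i < N \<and> j < N \<and> k < K) \<longrightarrow> S i j k = 0}"

definition dense_rank :: "nat \<Rightarrow> (nat \<Rightarrow> nat \<Rightarrow> real) \<Rightarrow> nat \<Rightarrow> nat \<Rightarrow> nat" where
  "dense_rank N S i j =
     1 + card {v. \<exists>a<N. \<exists>b<N. v = S a b \<and> v > S i j}"

definition rank_tensor :: "nat \<Rightarrow> nat \<Rightarrow> (nat \<Rightarrow> nat \<Rightarrow> nat \<Rightarrow> real) \<Rightarrow> (nat \<Rightarrow> nat \<Rightarrow> nat \<Rightarrow> nat)" where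
  "rank_tensor N K S = (\<lambda>i j k. if i < N \<and> j < N \<and> k < K
        then dense_rank N (\<lambda>a b. S a b k) i j else 0)"

definition bilinear_tensor :: "nat \<Rightarrow> nat \<Rightarrow> nat \<Rightarrow> (nat \<Rightarrow> nat \<Rightarrow> real)
      \<Rightarrow> (nat \<Rightarrow> nat \<Rightarrow> nat \<Rightarrow> real) \<Rightarrow> (nat \<Rightarrow> nat \<Rightarrow> nat \<Rightarrow> real)" where
  "bilinear_tensor N K r A R = (\<lambda>i j k. if i < N \<and> j < N \<and> k < K
        then (\<Sum>p<r. \<Sum>q<r. A i p * R k p q * A j q) else 0)"

definition is_bilinear_of_size :: "nat \<Rightarrow> nat \<Rightarrow> nat \<Rightarrow> (nat \<Rightarrow> nat \<Rightarrow> nat \<Rightarrow> real) \<Rightarrow> bool" where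
  "is_bilinear_of_size N K r S \<longleftrightarrow> (\<exists>A R. S = bilinear_tensor N K r A R)"

end

theory Submission
  imports Defs
begin

text \<open>Dense ranks only see which entries of a slice coincide. Hence any tensor with the same
  ranks as the tensor whose slices are identity matrices has slices of the shape \<open>c J + e I\<close>
  with \<open>e \<noteq> 0\<close>, which have rank at least \<open>N - 1\<close>; a slice \<open>A R\<^sub>k A\<^sup>T\<close> of a
  bilinear model of size \<open>r\<close> has rank at most \<open>r\<close>. So already \<open>r < N - 1\<close> suffices.\<close>

lemma homogeneous_system_nontrivial_solution:
  fixes C :: "nat \<Rightarrow> nat \<Rightarrow> real"
  assumes "finite I" "m < card I"
  shows "\<exists>x. (\<exists>i\<in>I. x i \<noteq> 0) \<and> (\<forall>p<m. (\<Sum>i\<in>I. C p i * x i) = 0)"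
  using assms
proof (induction m arbitrary: I C)
  case 0
  then obtain i where "i \<in> I" by fastforce
  then show ?case by (intro exI[of _ "\<lambda>_. 1"]) auto
next
  case (Suc m)
  show ?case
  proof (cases "\<forall>i\<in>I. C m i = 0")
    case True
    from Suc.IH[of I C] Suc.prems obtain x where x: "\<exists>i\<in>I. x i \<noteq> 0"
      "\<forall>p<m. (\<Sum>i\<in>I. C p i * x i) = 0" by auto
    have "\<forall>p<Suc m. (\<Sum>i\<in>I. C p i * x i) = 0"
      using x(2) True by (auto simp: less_Suc_eq)
    then show ?thesis using x(1) by blast
  next
    case False
    then obtain i0 where i0: "i0 \<in> I" "C m i0 \<noteq> 0" by auto
    \<comment> \<open>Gaussian elimination: use equation \<open>m\<close> to eliminate the unknown \<open>i0\<close>.\<close>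
    define C' where "C' p i = C p i - (C p i0 / C m i0) * C m i" for p i
    have "m < card (I - {i0})" using Suc.prems i0 by auto
    from Suc.IH[OF _ this, of C'] Suc.prems obtain y where y: "\<exists>i\<in>I-{i0}. y i \<noteq> 0"
      "\<forall>p<m. (\<Sum>i\<in>I-{i0}. C' p i * y i) = 0" by auto
    define z where "z = - (\<Sum>i\<in>I-{i0}. C m i * y i) / C m i0"
    define x where "x = y(i0 := z)"
    have sum_x: "(\<Sum>i\<in>I. C p i * x i) = C p i0 * z + (\<Sum>i\<in>I-{i0}. C p i * y i)" for p
    proof -
      have "(\<Sum>i\<in>I. C p i * x i) = C p i0 * x i0 + (\<Sum>i\<in>I-{i0}. C p i * x i)"
        using i0 Suc.prems by (simp add: sum.remove)
      also have "(\<Sum>i\<in>I-{i0}. C p i * x i) = (\<Sum>i\<in>I-{i0}. C p i * y i)"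
        by (rule sum.cong) (auto simp: x_def)
      finally show ?thesis by (simp add: x_def)
    qed
    have "(\<Sum>i\<in>I. C p i * x i) = 0" if "p < Suc m" for p
    proof (cases "p = m")
      case True
      then show ?thesis using sum_x[of m] i0 by (simp add: z_def)
    next
      case False
      then have "p < m" using that by auto
      have "(\<Sum>i\<in>I-{i0}. C' p i * y i) = (\<Sum>i\<in>I-{i0}. C p i * y i)
          - (C p i0 / C m i0) * (\<Sum>i\<in>I-{i0}. C m i * y i)"
        by (simp add: C'_def algebra_simps sum_subtractf sum_distrib_left)
      also have "\<dots> = (\<Sum>i\<in>I-{i0}. C p i * y i) + C p i0 * z"
        using i0 by (simp add: z_def field_simps)
      finally show ?thesis using sum_x[of p] y(2) \<open>p < m\<close> by simp
    qed
    moreover have "\<exists>i\<in>I. x i \<noteq> 0" using y(1) by (auto simp: x_def)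
    ultimately show ?thesis by blast
  qed
qed

lemma product_rows_dependent:
  fixes A B :: "nat \<Rightarrow> nat \<Rightarrow> real"
  assumes "r < n"
  shows "\<exists>x. (\<exists>i<n. x i \<noteq> 0) \<and> (\<forall>j. (\<Sum>i<n. x i * (\<Sum>p<r. A i p * B p j)) = 0)"
proof -
  obtain x where x: "\<exists>i<n. x i \<noteq> 0" "\<forall>p<r. (\<Sum>i<n. A i p * x i) = 0"
    using homogeneous_system_nontrivial_solution[of "{..<n}" r "\<lambda>p i. A i p"] assms by auto
  have "(\<Sum>i<n. x i * (\<Sum>p<r. A i p * B p j)) = (\<Sum>p<r. (\<Sum>i<n. A i p * x i) * B p j)" for j
    by (simp add: sum_distrib_left sum_distrib_right mult_ac) (rule sum.swap)
  then show ?thesis using x by auto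
qed

lemma shifted_identity_rows_independent:
  fixes x :: "nat \<Rightarrow> real"
  assumes "e \<noteq> 0" and comb: "\<And>j. j \<le> n \<Longrightarrow> (\<Sum>i<n. x i * (c + (if i = j then e else 0))) = 0"
    and "k < n"
  shows "x k = 0"
proof -
  have row_sum: "(\<Sum>i<n. x i * (c + (if i = j then e else 0))) = c * (\<Sum>i<n. x i) + x j * e"
    if "j < n" for j
  proof -
    have "(\<Sum>i<n. x i * (c + (if i = j then e else 0)))
        = (\<Sum>i<n. c * x i + (if i = j then x i * e else 0))"
      by (rule sum.cong) (auto simp: algebra_simps)
    also have "\<dots> = c * (\<Sum>i<n. x i) + x j * e"
      using that by (simp add: sum.distrib sum_distrib_left)
    finally show ?thesis .
  qed
  \<comment> \<open>The extra column \<open>n\<close> meets no diagonal entry of the first \<open>n\<close> rows.\<close>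
  have "c * (\<Sum>i<n. x i) = 0"
    using comb[of n] by (simp add: sum_distrib_left mult.commute)
  moreover have "(\<Sum>i<n. x i * (c + (if i = k then e else 0))) = 0"
    using comb \<open>k < n\<close> by simp
  ultimately have "x k * e = 0" using row_sum[OF \<open>k < n\<close>] by linarith
  then show ?thesis using \<open>e \<noteq> 0\<close> by simp
qed

lemma shifted_identity_factorization_rank:
  fixes A B :: "nat \<Rightarrow> nat \<Rightarrow> real"
  assumes "e \<noteq> 0"
    and factorization: "\<And>i j. \<lbrakk>i < n; j < n\<rbrakk>
        \<Longrightarrow> c + (if i = j then e else 0) = (\<Sum>p<r. A i p * B p j)"
  shows "n \<le> r + 1"
proof (rule ccontr)
  assume "\<not> n \<le> r + 1"
  then have "r < n - 1" by linarith
  then obtain x where x: "\<exists>i<n - 1. x i \<noteq> 0"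
      and rows: "\<forall>j. (\<Sum>i<n - 1. x i * (\<Sum>p<r. A i p * B p j)) = 0"
    using product_rows_dependent by blast
  have "(\<Sum>i<n - 1. x i * (c + (if i = j then e else 0))) = 0" if "j \<le> n - 1" for j
  proof -
    have "(\<Sum>i<n - 1. x i * (c + (if i = j then e else 0)))
        = (\<Sum>i<n - 1. x i * (\<Sum>p<r. A i p * B p j))"
      by (rule sum.cong) (use factorization that \<open>r < n - 1\<close> in auto)
    with rows show ?thesis by simp
  qed
  then show False
    using shifted_identity_rows_independent[OF \<open>e \<noteq> 0\<close>] x by blast
qed

lemma dense_rank_eq_iff:
  fixes g :: "nat \<Rightarrow> nat \<Rightarrow> real"
  assumes "i < N" "j < N" "i' < N" "j' < N"
  shows "dense_rank N g i j = dense_rank N g i' j' \<longleftrightarrow> g i j = g i' j'"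
proof
  have finite_above: "finite {v. \<exists>a<N. \<exists>b<N. v = g a b \<and> v > t}" for t
    by (rule finite_subset[of _ "(\<lambda>(a, b). g a b) ` ({..<N} \<times> {..<N})"]) auto
  have less: "card {v. \<exists>a<N. \<exists>b<N. v = g a b \<and> v > g i' j'}
      < card {v. \<exists>a<N. \<exists>b<N. v = g a b \<and> v > g i j}"
    if "g i j < g i' j'" "i' < N" "j' < N" for i j i' j'
    by (rule psubset_card_mono[OF finite_above]) (use that in \<open>auto; blast\<close>)
  assume "dense_rank N g i j = dense_rank N g i' j'"
  then show "g i j = g i' j'"
    using less[of i j i' j'] less[of i' j' i j] assms
    by (cases "g i j" "g i' j'" rule: linorder_cases) (auto simp: dense_rank_def)
qed (simp add: dense_rank_def)

lemma rank_tensor_eq_imp_same_ties: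
  assumes "rank_tensor N K S = rank_tensor N K T" "k < K"
    and "i < N" "j < N" "i' < N" "j' < N"
  shows "S i j k = S i' j' k \<longleftrightarrow> T i j k = T i' j' k"
proof -
  have "dense_rank N (\<lambda>a b. S a b k) a b = dense_rank N (\<lambda>a b. T a b k) a b"
    if "a < N" "b < N" for a b
    using fun_cong[OF fun_cong[OF fun_cong[OF assms(1), of a], of b], of k] that \<open>k < K\<close>
    by (simp add: rank_tensor_def)
  with assms(3-) show ?thesis
    using dense_rank_eq_iff[of i N j i' j' "\<lambda>a b. S a b k"]
      dense_rank_eq_iff[of i N j i' j' "\<lambda>a b. T a b k"] by simp
qed

lemma identity_ties_imp_shifted_identity:
  fixes g :: "nat \<Rightarrow> nat \<Rightarrow> real"
  assumes "2 \<le> N"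
    and ties: "\<And>i j i' j'. \<lbrakk>i < N; j < N; i' < N; j' < N\<rbrakk>
        \<Longrightarrow> g i j = g i' j' \<longleftrightarrow> (i = j \<longleftrightarrow> i' = j')"
  shows "\<exists>c e. e \<noteq> 0 \<and> (\<forall>i<N. \<forall>j<N. g i j = c + (if i = j then e else 0))"
proof (intro exI conjI allI impI)
  show "g 0 0 - g 1 0 \<noteq> 0" using ties[of 0 0 1 0] assms(1) by simp
  fix i j assume "i < N" "j < N"
  then show "g i j = g 1 0 + (if i = j then g 0 0 - g 1 0 else 0)"
    using ties[of i j 1 0] ties[of i j 0 0] assms(1) by auto
qed

lemma bilinear_tensor_slice:
  assumes "i < N" "j < N" "k < K"
  shows "bilinear_tensor N K r A R i j k = (\<Sum>p<r. A i p * (\<Sum>q<r. R k p q * A j q))"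
  using assms by (simp add: bilinear_tensor_def sum_distrib_left mult.assoc)

theorem corollary3:
  fixes N K :: nat and M :: "(nat \<Rightarrow> nat \<Rightarrow> nat \<Rightarrow> real) set"
  assumes "N \<ge> 2" and "K \<ge> 1"
    and "\<forall>S\<in>M. \<exists>r::nat. real r < real N / 32 \<and> is_bilinear_of_size N K r S"
  shows "rank_tensor N K ` M \<noteq> rank_tensor N K ` tensors N K"
proof
  assume universal: "rank_tensor N K ` M = rank_tensor N K ` tensors N K"
  define T :: "nat \<Rightarrow> nat \<Rightarrow> nat \<Rightarrow> real" where
    "T = (\<lambda>i j k. if i < N \<and> j < N \<and> k < K \<and> i = j then 1 else 0)"
  have "T \<in> tensors N K" by (simp add: T_def tensors_def)
  then obtain S where "S \<in> M" and same_rank: "rank_tensor N K S = rank_tensor N K T"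
    using universal by (metis image_iff)
  then obtain r A R where r: "real r < real N / 32" and S: "S = bilinear_tensor N K r A R"
    using assms(3) unfolding is_bilinear_of_size_def by blast
  have "K > 0" using assms(2) by simp
  have "S i j 0 = S i' j' 0 \<longleftrightarrow> (i = j \<longleftrightarrow> i' = j')"
    if "i < N" "j < N" "i' < N" "j' < N" for i j i' j'
  proof -
    have "T i j 0 = T i' j' 0 \<longleftrightarrow> (i = j \<longleftrightarrow> i' = j')"
      using that \<open>K > 0\<close> unfolding T_def by auto
    then show ?thesis using rank_tensor_eq_imp_same_ties[OF same_rank \<open>K > 0\<close> that] by simp
  qed
  then obtain c e where "e \<noteq> 0" and S_shape: "\<forall>i<N. \<forall>j<N. S i j 0 = c + (if i = j then e else 0)"
    using identity_ties_imp_shifted_identity[OF assms(1), of "\<lambda>i j. S i j 0"] by blast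
  have "N \<le> r + 1"
  proof (rule shifted_identity_factorization_rank[OF \<open>e \<noteq> 0\<close>])
    fix i j assume "i < N" "j < N"
    then show "c + (if i = j then e else 0) = (\<Sum>p<r. A i p * (\<Sum>q<r. R 0 p q * A j q))"
      using S_shape bilinear_tensor_slice[of i N j 0 K r A R] \<open>K > 0\<close> unfolding S by simp
  qed
  then have "real N \<le> real r + 1" by simp
  moreover have "real N \<ge> 2" using assms(1) by simp
  ultimately show False using r by linarith
qed

end
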